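(* In the single expert committee under liquid democracy, there is a neutral strategy profile that maximizes the probability that the outcome matches the state among all neutral strategy profiles and under which every nonexpert who does not abstain holds at most one vote.
   Context: Single expert committee: $N$ voters with $N$ odd, all independent (payoff 1 if the outcome matches the state, $A$ with $a$ and $B$ with $b$, else 0); $N-1$ nonexperts of precision $q\in(1/2,1)$ and one expert of precision $r\in(q,1)$; prior $\Pr(\omega=a)=1/2$ for state $\omega\in\{a,b\}$; voter $i$ observes private signal $s_i$ with $\Pr(s_i=\omega\mid\omega)=q_i$, conditionally independent; precisions are common knowledge. Outcome: simple majority of votes cast, ties broken uniformly at random. Liquid democracy: each voter maps her signal to vote $A$, vote $B$, abstain, or delegate to another voter; delegation is transitive, votes in a delegation cycle are abstained, and a non-delegator casts all votes she holds (own plus delegated) for the same alternative or abstains them all. A strategy profile is neutral if each voter votes sincerely ($a$ at signal $a$, $b$ at signal $b$), abstains at both signals, or delegates to the same voter at both signals. The number of votes a voter holds is her own vote (if she does not delegate) plus all votes delegated to her directly or transitively. *)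

theory Defs
  imports Complex_Main "HOL-Library.FuncSet"
begin

(* Voters are 0..N-1. A neutral strategy of a voter is signal-independent in kind:
   vote sincerely (a at signal a, b at signal b), abstain at both signals,
   or delegate to the same voter j at both signals. States/signals: True = a, False = b. *)
datatype action = Sincere | Abstain | Deleg nat

definition neutral_profile :: "nat \<Rightarrow> (nat \<Rightarrow> action) \<Rightarrow> bool" where
  "neutral_profile N \<sigma> \<longleftrightarrow>
     (\<forall>i<N. \<forall>j. \<sigma> i = Deleg j \<longrightarrow> j < N \<and> j \<noteq> i)"

definition delegates :: "action \<Rightarrow> bool" where
  "delegates a \<longleftrightarrow> (\<exists>j. a = Deleg j)"

definition deleg_rel :: "nat \<Rightarrow> (nat \<Rightarrow> action) \<Rightarrow> (nat \<times> nat) set" where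
  "deleg_rel N \<sigma> = {(i, j). i < N \<and> \<sigma> i = Deleg j}"

definition held :: "nat \<Rightarrow> (nat \<Rightarrow> action) \<Rightarrow> nat \<Rightarrow> nat" where
  "held N \<sigma> i = (if delegates (\<sigma> i) then 0 else 1)
      + card {j. j < N \<and> j \<noteq> i \<and> (j, i) \<in> (deleg_rel N \<sigma>)\<^sup>+}"

(* votes cast for alternative x (True = A, False = B) under signal profile s;
   only sincere non-delegators cast votes; votes ending in a cycle or with an
   abstainer are abstained *)
definition votes_for :: "nat \<Rightarrow> (nat \<Rightarrow> action) \<Rightarrow> (nat \<Rightarrow> bool) \<Rightarrow> bool \<Rightarrow> nat" where
  "votes_for N \<sigma> s x = (\<Sum>i<N. if \<sigma> i = Sincere \<and> s i = x then held N \<sigma> i else 0)"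

definition win_prob :: "nat \<Rightarrow> (nat \<Rightarrow> action) \<Rightarrow> (nat \<Rightarrow> bool) \<Rightarrow> bool \<Rightarrow> real" where
  "win_prob N \<sigma> s w =
    (let A = votes_for N \<sigma> s True; B = votes_for N \<sigma> s False in
     if A > B then (if w then 1 else 0)
     else if B > A then (if w then 0 else 1)
     else 1/2)"

definition prec :: "real \<Rightarrow> real \<Rightarrow> nat \<Rightarrow> nat \<Rightarrow> real" where
  "prec q r e i = (if i = e then r else q)"

(* probability that the outcome matches the state; prior 1/2, conditionally
   independent signals with Pr(s_i = w | w) = prec i *)
definition P_correct :: "nat \<Rightarrow> real \<Rightarrow> real \<Rightarrow> nat \<Rightarrow> (nat \<Rightarrow> action) \<Rightarrow> real" where
  "P_correct N q r e \<sigma> =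
    (\<Sum>w\<in>(UNIV::bool set). (1/2) *
       (\<Sum>s\<in>({..<N} \<rightarrow>\<^sub>E (UNIV::bool set)).
          (\<Prod>i<N. if s i = w then prec q r e i else 1 - prec q r e i) * win_prob N \<sigma> s w))"

end

theory Submission
  imports Defs
begin

text \<open>Fix any profile \<open>\<tau>\<close> and let \<open>S\<close> be its sincere nonexperts, \<open>m = card S\<close>.
  Only the signals of \<open>U = S \<union> {e}\<close> influence the outcome under \<open>\<tau>\<close>. Pairing each signal
  profile with the one flipped outside \<open>U\<close> shows that a profile whose sincere voters lie in
  \<open>U\<close> beats \<open>\<tau>\<close> as soon as, for every signal profile, it decides in favour of the state
  that is more likely given the signals in \<open>U\<close>, except where \<open>\<tau>\<close> makes the same decision.
  Such a profile is the weighted majority in which every member of \<open>S\<close> holds one vote and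
  the expert holds \<open>k\<close> votes, \<open>k - 1\<close> of them delegated by nonexperts outside \<open>U\<close>: the
  posterior favours the expert's signal iff the members of \<open>S\<close> against it outnumber those
  for it by at most \<open>\<rho> = log_odds r / log_odds q\<close>, so \<open>k\<close> is \<open>\<rho>\<close> rounded to make
  \<open>k + m\<close> odd, capped by the \<open>N - m\<close> votes available. Where the cap binds, the members of
  \<open>S\<close> with the same signal form an absolute majority, which \<open>\<tau>\<close> cannot overturn either.
  Hence the best of the finitely many such expert profiles is optimal.\<close>

lemma sinks_reachable_eq:
  assumes "single_valued R" "(x, y) \<in> R\<^sup>*" "(x, z) \<in> R\<^sup>*" "y \<notin> Domain R" "z \<notin> Domain R"
  shows "y = z"
  using single_valued_confluent[OF assms(1-3)] assms(4,5)
  by (auto elim: converse_rtranclE)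

lemma single_valued_deleg_rel: "single_valued (deleg_rel N \<sigma>)"
  by (auto simp: single_valued_def deleg_rel_def)

definition delegators :: "nat \<Rightarrow> (nat \<Rightarrow> action) \<Rightarrow> nat \<Rightarrow> nat set" where
  "delegators N \<sigma> i = {j. j < N \<and> j \<noteq> i \<and> (j, i) \<in> (deleg_rel N \<sigma>)\<^sup>+}"

lemma held_Sincere: "\<sigma> i = Sincere \<Longrightarrow> held N \<sigma> i = 1 + card (delegators N \<sigma> i)"
  by (simp add: held_def delegates_def delegators_def)

lemma delegators_disjoint:
  assumes "\<sigma> i = Sincere" "\<sigma> i' = Sincere" "i \<noteq> i'"
  shows "delegators N \<sigma> i \<inter> delegators N \<sigma> i' = {}"
proof -
  have "i \<notin> Domain (deleg_rel N \<sigma>)" "i' \<notin> Domain (deleg_rel N \<sigma>)"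
    using assms(1,2) by (auto simp: deleg_rel_def)
  then show ?thesis
    using sinks_reachable_eq[OF single_valued_deleg_rel] assms(3)
    by (fastforce simp: delegators_def dest: trancl_into_rtrancl)
qed

lemma Sincere_notin_delegators:
  "\<sigma> j = Sincere \<Longrightarrow> j \<notin> delegators N \<sigma> i"
  by (auto simp: delegators_def deleg_rel_def dest: tranclD)

lemma votes_for_total_le: "votes_for N \<sigma> s True + votes_for N \<sigma> s False \<le> N"
proof -
  define V where "V = {i. i < N \<and> \<sigma> i = Sincere}"
  have fin: "finite V" "\<And>i. finite (delegators N \<sigma> i)"
    by (auto simp: V_def delegators_def)
  have "votes_for N \<sigma> s True + votes_for N \<sigma> s False
      = (\<Sum>i<N. if \<sigma> i = Sincere then held N \<sigma> i else 0)"
    unfolding votes_for_def sum.distrib[symmetric] by (intro sum.cong) auto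
  also have "\<dots> = (\<Sum>i\<in>V. held N \<sigma> i)"
    by (simp add: V_def sum.inter_filter[symmetric] lessThan_def)
  also have "\<dots> = card V + (\<Sum>i\<in>V. card (delegators N \<sigma> i))"
    by (simp add: V_def held_Sincere sum.distrib del: plus_nat.simps)
  also have "\<dots> = card V + card (\<Union>i\<in>V. delegators N \<sigma> i)"
    using fin delegators_disjoint by (subst card_UN_disjoint) (auto simp: V_def)
  also have "\<dots> = card (V \<union> (\<Union>i\<in>V. delegators N \<sigma> i))"
    using fin Sincere_notin_delegators by (subst card_Un_disjoint) (auto simp: V_def)
  also have "\<dots> \<le> card {..<N}"
    by (intro card_mono) (auto simp: V_def delegators_def)
  finally show ?thesis by simp
qed

lemma card_Sincere_le_votes_for:
  "card {i. i < N \<and> \<sigma> i = Sincere \<and> s i = x} \<le> votes_for N \<sigma> s x"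
proof -
  have "card {i. i < N \<and> \<sigma> i = Sincere \<and> s i = x} = (\<Sum>i<N. if \<sigma> i = Sincere \<and> s i = x then 1 else 0)"
    by (simp add: sum.inter_filter[symmetric] lessThan_def)
  also have "\<dots> \<le> votes_for N \<sigma> s x"
    unfolding votes_for_def by (intro sum_mono) (simp add: held_Sincere)
  finally show ?thesis .
qed

lemma win_prob_absolute_majority:
  assumes "N < 2 * card {i. i < N \<and> \<sigma> i = Sincere \<and> s i = x}"
  shows "win_prob N \<sigma> s w = (if w = x then 1 else 0)"
proof -
  have "votes_for N \<sigma> s (\<not> x) < votes_for N \<sigma> s x"
    using assms card_Sincere_le_votes_for[of N \<sigma> s x] votes_for_total_le[of N \<sigma> s]
    by (cases x) auto
  then show ?thesis
    by (cases x) (auto simp: win_prob_def Let_def)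
qed

definition prob_A_wins :: "nat \<Rightarrow> nat \<Rightarrow> real" where
  "prob_A_wins a b = (if b < a then 1 else if a < b then 0 else 1/2)"

lemma prob_A_wins_swap: "prob_A_wins b a = 1 - prob_A_wins a b"
  by (simp add: prob_A_wins_def)

lemma win_prob_True:
  "win_prob N \<sigma> s True = prob_A_wins (votes_for N \<sigma> s True) (votes_for N \<sigma> s False)"
  by (simp add: win_prob_def prob_A_wins_def Let_def)

lemma win_prob_False: "win_prob N \<sigma> s False = 1 - win_prob N \<sigma> s True"
  by (simp add: win_prob_def Let_def)

lemma win_prob_nonneg: "0 \<le> win_prob N \<sigma> s w"
  and win_prob_le_one: "win_prob N \<sigma> s w \<le> 1"
  by (auto simp: win_prob_def Let_def)

lemma win_prob_cong:
  assumes "\<And>i. i < N \<Longrightarrow> \<sigma> i = Sincere \<Longrightarrow> s' i = s i"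
  shows "win_prob N \<sigma> s' w = win_prob N \<sigma> s w"
proof -
  have "votes_for N \<sigma> s' x = votes_for N \<sigma> s x" for x
    unfolding votes_for_def using assms by (intro sum.cong) auto
  then show ?thesis by (simp add: win_prob_def)
qed

definition signal_lik :: "real \<Rightarrow> real \<Rightarrow> nat \<Rightarrow> nat set \<Rightarrow> (nat \<Rightarrow> bool) \<Rightarrow> bool \<Rightarrow> real" where
  "signal_lik q r e I s w = (\<Prod>i\<in>I. if s i = w then prec q r e i else 1 - prec q r e i)"

lemma P_correct_eq:
  "P_correct N q r e \<sigma> = 1/2 * (\<Sum>s\<in>{..<N} \<rightarrow>\<^sub>E UNIV.
     signal_lik q r e {..<N} s True * win_prob N \<sigma> s True
     + signal_lik q r e {..<N} s False * (1 - win_prob N \<sigma> s True))"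
  unfolding P_correct_def UNIV_bool signal_lik_def
  by (simp add: win_prob_False sum.distrib distrib_left)

lemma sum_nonneg_involution:
  fixes F :: "'a \<Rightarrow> 'b::linordered_idom"
  assumes "finite A" "\<And>x. x \<in> A \<Longrightarrow> h x \<in> A" "\<And>x. x \<in> A \<Longrightarrow> h (h x) = x"
    and "\<And>x. x \<in> A \<Longrightarrow> 0 \<le> F x + F (h x)"
  shows "0 \<le> sum F A"
proof -
  have "sum F A = sum (F \<circ> h) A"
    by (rule sum.reindex_bij_witness[of _ h h]) (auto simp: assms(2,3))
  then have "2 * sum F A = (\<Sum>x\<in>A. F x + F (h x))"
    by (simp add: sum.distrib)
  also have "\<dots> \<ge> 0"
    by (intro sum_nonneg assms(4))
  finally show ?thesis by simp
qed

text \<open>Flipping a signal profile outside \<open>U\<close> leaves both outcomes and the likelihood of the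
  signals in \<open>U\<close> unchanged and swaps the likelihoods of the remaining signals under the two
  states.\<close>

lemma P_correct_le_of_pointwise:
  assumes U: "U \<subseteq> {..<N}" and qr: "0 \<le> q" "q \<le> 1" "0 \<le> r" "r \<le> 1"
    and \<sigma>: "\<And>i. i < N \<Longrightarrow> \<sigma> i = Sincere \<Longrightarrow> i \<in> U"
    and \<tau>: "\<And>i. i < N \<Longrightarrow> \<tau> i = Sincere \<Longrightarrow> i \<in> U"
    and pointwise: "\<And>s. 0 \<le> (win_prob N \<sigma> s True - win_prob N \<tau> s True)
                        * (signal_lik q r e U s True - signal_lik q r e U s False)"
  shows "P_correct N q r e \<tau> \<le> P_correct N q r e \<sigma>"
proof -
  define PS where "PS = {..<N} \<rightarrow>\<^sub>E (UNIV :: bool set)"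
  define g where "g \<rho> s = win_prob N \<rho> s True" for \<rho> s
  define A where "A = signal_lik q r e U"
  define B where "B = signal_lik q r e ({..<N} - U)"
  define F where "F s = (signal_lik q r e {..<N} s True - signal_lik q r e {..<N} s False)
                       * (g \<sigma> s - g \<tau> s)" for s
  define h where "h s i = (if i < N \<and> i \<notin> U then \<not> s i else s i)" for s i
  have "P_correct N q r e \<sigma> - P_correct N q r e \<tau> = 1/2 * sum F PS"
    unfolding P_correct_eq PS_def F_def g_def
    by (simp add: sum_subtractf[symmetric] right_diff_distrib[symmetric] algebra_simps)
  moreover have "0 \<le> sum F PS"
  proof (rule sum_nonneg_involution[of PS h])
    show "finite PS" by (simp add: PS_def finite_PiE)
    show "h s \<in> PS" if "s \<in> PS" for s
      using that by (auto simp: PS_def h_def PiE_iff extensional_def)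
    show "h (h s) = s" for s by (simp add: h_def fun_eq_iff)
    fix s
    have split: "signal_lik q r e {..<N} s' w = B s' w * A s' w" for s' w
      unfolding A_def B_def signal_lik_def by (rule prod.subset_diff[OF U]) simp
    have "A (h s) w = A s w" for w
      unfolding A_def signal_lik_def h_def by (intro prod.cong) auto
    moreover have "B (h s) w = B s (\<not> w)" for w
      unfolding B_def signal_lik_def h_def by (intro prod.cong) auto
    moreover have "g \<sigma> (h s) = g \<sigma> s" "g \<tau> (h s) = g \<tau> s"
      unfolding g_def by (intro win_prob_cong; simp add: h_def \<sigma> \<tau>)+
    moreover have "0 \<le> B s True + B s False"
      unfolding B_def signal_lik_def using qr
      by (intro add_nonneg_nonneg prod_nonneg) (auto simp: prec_def)
    ultimately have "F s + F (h s) = ((g \<sigma> s - g \<tau> s) * (A s True - A s False)) * (B s True + B s False)"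
      unfolding F_def split by (simp add: algebra_simps)
    also have "\<dots> \<ge> 0"
      using pointwise \<open>0 \<le> B s True + B s False\<close> unfolding g_def A_def by simp
    finally show "0 \<le> F s + F (h s)" .
  qed
  ultimately show ?thesis by simp
qed

definition log_odds :: "real \<Rightarrow> real" where
  "log_odds p = ln p - ln (1 - p)"

lemma log_odds_less:
  assumes "0 < p" "p < p'" "p' < 1"
  shows "log_odds p < log_odds p'"
proof -
  have "ln p < ln p'" "ln (1 - p') < ln (1 - p)"
    using assms by simp_all
  then show ?thesis by (simp add: log_odds_def)
qed

lemma log_odds_pos: "1/2 < p \<Longrightarrow> p < 1 \<Longrightarrow> 0 < log_odds p"
  by (simp add: log_odds_def)

lemma likelihood_le_iff:
  fixes a b q :: real and na nb :: nat
  assumes "0 < a" "0 < b" "0 < q" "q < 1"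
  shows "b * q ^ nb * (1 - q) ^ na \<le> a * q ^ na * (1 - q) ^ nb
     \<longleftrightarrow> ln b - ln a \<le> (real na - real nb) * log_odds q"
proof -
  have "b * q ^ nb * (1 - q) ^ na \<le> a * q ^ na * (1 - q) ^ nb
     \<longleftrightarrow> ln (b * q ^ nb * (1 - q) ^ na) \<le> ln (a * q ^ na * (1 - q) ^ nb)"
    using assms by (simp only: ln_le_cancel_iff mult_pos_pos zero_less_power diff_gt_0_iff_gt)
  also have "\<dots> \<longleftrightarrow> ln b + nb * ln q + na * ln (1 - q) \<le> ln a + na * ln q + nb * ln (1 - q)"
    using assms by (simp add: ln_mult ln_realpow)
  also have "\<dots> \<longleftrightarrow> ln b - ln a \<le> (real na - real nb) * log_odds q"
    by (simp add: log_odds_def algebra_simps)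
  finally show ?thesis .
qed

lemma exists_odd_threshold:
  fixes \<rho> :: real and n m :: nat
  assumes "1 \<le> \<rho>" "1 \<le> n" "odd (n + m)"
  obtains k where "1 \<le> k" "k \<le> n" "odd (k + m)" "real k \<le> \<rho> + 1" "\<rho> \<le> real k + 1 \<or> k = n"
proof -
  define f where "f = nat \<lfloor>\<rho>\<rfloor>"
  have f: "1 \<le> f" "real f \<le> \<rho>" "\<rho> < real f + 1"
    using assms(1) by (simp_all add: f_def le_nat_iff)
  define k where "k = min n (if odd (f + m) then f else f + 1)"
  have "1 \<le> k" "k \<le> n" "odd (k + m)"
    using f(1) assms(2,3) by (auto simp: k_def min_def)
  moreover have "real k \<le> \<rho> + 1" "\<rho> \<le> real k + 1 \<or> k = n"
    using f(2,3) by (auto simp: k_def min_def)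
  ultimately show thesis by (rule that)
qed

lemma weighted_majority_agrees_with_posterior:
  fixes q r g :: real and k na nb N :: nat
  assumes q: "1/2 < q" "q < 1" and r: "0 < r" "r < 1" and \<rho>: "log_odds r = \<rho> * log_odds q"
    and k: "odd (k + na + nb)" "real k \<le> \<rho> + 1" "\<rho> \<le> real k + 1 \<or> k + na + nb = N"
    and g: "0 \<le> g" "g \<le> 1" "N < 2 * nb \<Longrightarrow> g = 0"
  shows "0 \<le> (prob_A_wins (k + na) nb - g)
              * (r * q ^ na * (1 - q) ^ nb - (1 - r) * q ^ nb * (1 - q) ^ na)"
proof -
  have M: "0 < log_odds q" using q by (rule log_odds_pos)
  have lik_ge: "(1 - r) * q ^ nb * (1 - q) ^ na \<le> r * q ^ na * (1 - q) ^ nb"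
    if "- \<rho> \<le> real na - real nb"
  proof -
    have "- \<rho> * log_odds q \<le> (real na - real nb) * log_odds q"
      using that M by (intro mult_right_mono) auto
    then have "ln (1 - r) - ln r \<le> (real na - real nb) * log_odds q"
      using \<rho> by (simp add: log_odds_def)
    then show ?thesis
      using likelihood_le_iff[of r "1 - r" q nb na] q r by simp
  qed
  have lik_le: "r * q ^ na * (1 - q) ^ nb \<le> (1 - r) * q ^ nb * (1 - q) ^ na"
    if "real na - real nb \<le> - \<rho>"
  proof -
    have "\<rho> * log_odds q \<le> (real nb - real na) * log_odds q"
      using that M by (intro mult_right_mono) auto
    then have "ln r - ln (1 - r) \<le> (real nb - real na) * log_odds q"
      using \<rho> by (simp add: log_odds_def)
    then show ?thesis
      using likelihood_le_iff[of "1 - r" r q na nb] q r by simp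
  qed
  have "k + na \<noteq> nb" using k(1) by presburger
  then consider "nb < k + na" | "k + na < nb" by linarith
  then show ?thesis
  proof cases
    case 1
    then have "- \<rho> \<le> real na - real nb" using k(2) by linarith
    then show ?thesis using lik_ge 1 g by (simp add: prob_A_wins_def)
  next
    case 2
    show ?thesis
    proof (cases "\<rho> \<le> real k + 1")
      case True
      with 2 have "real na - real nb \<le> - \<rho>" by linarith
      then show ?thesis
        using lik_le 2 g by (simp add: prob_A_wins_def mult_nonneg_nonpos)
    next
      case False
      with k(3) 2 have "N < 2 * nb" by linarith
      with 2 g show ?thesis by (simp add: prob_A_wins_def)
    qed
  qed
qed

lemma weighted_majority_pointwise:
  fixes q r g :: real and k na nb N :: nat and se :: bool
  assumes q: "1/2 < q" "q < 1" and r: "0 < r" "r < 1" and \<rho>: "log_odds r = \<rho> * log_odds q"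
    and k: "odd (k + na + nb)" "real k \<le> \<rho> + 1" "\<rho> \<le> real k + 1 \<or> k + na + nb = N"
    and g: "0 \<le> g" "g \<le> 1" "N < 2 * na \<Longrightarrow> g = 1" "N < 2 * nb \<Longrightarrow> g = 0"
  shows "0 \<le> (prob_A_wins ((if se then k else 0) + na) ((if se then 0 else k) + nb) - g)
              * ((if se then r else 1 - r) * q ^ na * (1 - q) ^ nb
                 - (if se then 1 - r else r) * q ^ nb * (1 - q) ^ na)"
proof (cases se)
  case True
  then show ?thesis
    using weighted_majority_agrees_with_posterior[OF q r \<rho> k g(1,2,4)] by simp
next
  case False
  have "odd (k + nb + na)" "\<rho> \<le> real k + 1 \<or> k + nb + na = N"
    using k(1,3) by (simp_all add: add_ac)
  moreover have "0 \<le> 1 - g" "1 - g \<le> 1" "N < 2 * na \<Longrightarrow> 1 - g = 0"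
    using g by simp_all
  ultimately have "0 \<le> (prob_A_wins (k + nb) na - (1 - g))
              * (r * q ^ nb * (1 - q) ^ na - (1 - r) * q ^ na * (1 - q) ^ nb)"
    using weighted_majority_agrees_with_posterior[OF q r \<rho> _ k(2)] by simp
  moreover have "(prob_A_wins na (k + nb) - g)
      * ((1 - r) * q ^ na * (1 - q) ^ nb - r * q ^ nb * (1 - q) ^ na)
    = (prob_A_wins (k + nb) na - (1 - g))
      * (r * q ^ nb * (1 - q) ^ na - (1 - r) * q ^ na * (1 - q) ^ nb)"
    unfolding prob_A_wins_swap[of "k + nb" na] by (simp add: algebra_simps)
  ultimately show ?thesis
    using False by simp
qed

definition expert_profile :: "nat \<Rightarrow> nat set \<Rightarrow> nat set \<Rightarrow> nat \<Rightarrow> action" where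
  "expert_profile e S D i =
     (if i = e \<or> i \<in> S then Sincere else if i \<in> D then Deleg e else Abstain)"

locale expert_delegation =
  fixes N e :: nat and S D :: "nat set"
  assumes e: "e < N" and S: "S \<subseteq> {..<N} - {e}" and D: "D \<subseteq> {..<N} - {e}"
    and disjoint: "S \<inter> D = {}"
begin

abbreviation \<sigma> :: "nat \<Rightarrow> action" where
  "\<sigma> \<equiv> expert_profile e S D"

lemma neutral_expert_profile: "neutral_profile N \<sigma>"
  using e by (auto simp: neutral_profile_def expert_profile_def)

lemma trancl_deleg_rel_expert_profile: "(deleg_rel N \<sigma>)\<^sup>+ = D \<times> {e}"
proof -
  have "deleg_rel N \<sigma> = D \<times> {e}"
    using D disjoint by (auto simp: deleg_rel_def expert_profile_def split: if_splits)
  moreover have "trans (D \<times> {e})"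
    using D by (auto simp: trans_def)
  ultimately show ?thesis by simp
qed

lemma held_expert_profile_le_one: "i \<noteq> e \<Longrightarrow> held N \<sigma> i \<le> 1"
  by (simp add: held_def trancl_deleg_rel_expert_profile)

lemma votes_for_expert_profile:
  "votes_for N \<sigma> s x = (if s e = x then card D + 1 else 0) + card {i\<in>S. s i = x}"
proof -
  have fin: "finite S" "finite D" "e \<notin> S"
    using S D by (auto intro: finite_subset)
  have held: "held N \<sigma> i = (if i = e then card D + 1 else 1)" if "i \<in> insert e S" for i
  proof -
    have "delegators N \<sigma> i = (if i = e then D else {})"
      using D by (auto simp: delegators_def trancl_deleg_rel_expert_profile)
    then show ?thesis
      using that by (simp add: held_Sincere expert_profile_def)
  qed
  have "votes_for N \<sigma> s x = (\<Sum>i\<in>insert e S. if s i = x then held N \<sigma> i else 0)"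
    unfolding votes_for_def using e S
    by (intro sum.mono_neutral_cong_right) (auto simp: expert_profile_def)
  also have "\<dots> = (if s e = x then card D + 1 else 0) + (\<Sum>i\<in>S. if s i = x then 1 else 0)"
  proof -
    have "(\<Sum>i\<in>S. if s i = x then held N \<sigma> i else 0) = (\<Sum>i\<in>S. if s i = x then 1 else 0)"
      using fin held by (intro sum.cong) auto
    then show ?thesis using fin held by simp
  qed
  also have "(\<Sum>i\<in>S. if s i = x then 1 else 0) = card {i\<in>S. s i = x}"
    using fin by (simp add: sum.inter_filter[symmetric])
  finally show ?thesis .
qed

end

definition expert_profiles :: "nat \<Rightarrow> nat \<Rightarrow> (nat \<Rightarrow> action) set" where
  "expert_profiles N e =
     {expert_profile e S D | S D. S \<subseteq> {..<N} - {e} \<and> D \<subseteq> {..<N} - {e} \<and> S \<inter> D = {}}"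

lemma finite_expert_profiles: "finite (expert_profiles N e)"
proof -
  have "expert_profiles N e \<subseteq> (\<lambda>(S, D). expert_profile e S D) ` (Pow {..<N} \<times> Pow {..<N})"
    by (auto simp: expert_profiles_def)
  then show ?thesis by (rule finite_subset) simp
qed

lemma signal_lik_insert_expert:
  assumes "finite S" "e \<notin> S"
  shows "signal_lik q r e (insert e S) s w
    = (if s e = w then r else 1 - r) * q ^ card {i\<in>S. s i = w} * (1 - q) ^ card {i\<in>S. s i \<noteq> w}"
proof -
  have "(\<Prod>i\<in>S. if s i = w then prec q r e i else 1 - prec q r e i)
      = (\<Prod>i\<in>S. if s i = w then q else 1 - q)"
    using assms(2) by (intro prod.cong) (auto simp: prec_def)
  also have "\<dots> = q ^ card {i\<in>S. s i = w} * (1 - q) ^ card {i\<in>S. s i \<noteq> w}"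
    using assms(1) by (simp add: prod.If_cases Collect_conj_eq Int_commute Compl_eq)
  finally show ?thesis
    using assms by (simp add: signal_lik_def prec_def mult.assoc)
qed

lemma (in expert_delegation) P_correct_le_expert_profile:
  assumes qr: "1/2 < q" "q < r" "r < 1" and \<rho>: "log_odds r = \<rho> * log_odds q"
    and S_eq: "S = {i. i < N \<and> i \<noteq> e \<and> \<tau> i = Sincere}"
    and k: "card D + 1 = k" "odd (k + card S)" "real k \<le> \<rho> + 1"
      "\<rho> \<le> real k + 1 \<or> k + card S = N"
  shows "P_correct N q r e \<tau> \<le> P_correct N q r e \<sigma>"
proof (rule P_correct_le_of_pointwise[where U = "insert e S"])
  have S_fin: "finite S" and e_notin_S: "e \<notin> S"
    using S by (auto intro: finite_subset)
  show "insert e S \<subseteq> {..<N}" using S e by auto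
  show "0 \<le> q" "q \<le> 1" "0 \<le> r" "r \<le> 1" using qr by auto
  show "i \<in> insert e S" if "i < N" "\<sigma> i = Sincere" for i
    using that by (auto simp: expert_profile_def split: if_splits)
  show "i \<in> insert e S" if "i < N" "\<tau> i = Sincere" for i
    using that by (auto simp: S_eq)
  fix s
  define na where "na = card {i\<in>S. s i}"
  define nb where "nb = card {i\<in>S. \<not> s i}"
  have "na + nb = card S"
    unfolding na_def nb_def using S_fin
    by (subst card_Un_disjoint[symmetric]) (auto intro: arg_cong[where f = card])
  then have "odd (k + na + nb)" "\<rho> \<le> real k + 1 \<or> k + na + nb = N"
    using k by (auto simp: add.assoc)
  moreover have "na \<le> card {i. i < N \<and> \<tau> i = Sincere \<and> s i = True}"
    "nb \<le> card {i. i < N \<and> \<tau> i = Sincere \<and> s i = False}"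
    unfolding na_def nb_def by (auto intro: card_mono simp: S_eq)
  then have "N < 2 * na \<Longrightarrow> win_prob N \<tau> s True = 1"
    "N < 2 * nb \<Longrightarrow> win_prob N \<tau> s True = 0"
    using win_prob_absolute_majority[of N \<tau> s True True]
      win_prob_absolute_majority[of N \<tau> s False True] by auto
  ultimately have "0 \<le> (prob_A_wins ((if s e then k else 0) + na) ((if s e then 0 else k) + nb)
        - win_prob N \<tau> s True)
      * ((if s e then r else 1 - r) * q ^ na * (1 - q) ^ nb
         - (if s e then 1 - r else r) * q ^ nb * (1 - q) ^ na)"
    using qr \<rho> k(3) win_prob_nonneg win_prob_le_one
    by (intro weighted_majority_pointwise) auto
  moreover have "votes_for N \<sigma> s True = (if s e then k else 0) + na"
    "votes_for N \<sigma> s False = (if s e then 0 else k) + nb"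
    using k(1) by (simp_all add: votes_for_expert_profile na_def nb_def)
  moreover have
    "signal_lik q r e (insert e S) s True = (if s e then r else 1 - r) * q ^ na * (1 - q) ^ nb"
    "signal_lik q r e (insert e S) s False = (if s e then 1 - r else r) * q ^ nb * (1 - q) ^ na"
    using S_fin e_notin_S by (simp_all add: signal_lik_insert_expert na_def nb_def)
  ultimately show "0 \<le> (win_prob N \<sigma> s True - win_prob N \<tau> s True)
      * (signal_lik q r e (insert e S) s True - signal_lik q r e (insert e S) s False)"
    by (simp only: win_prob_True)
qed

lemma expert_profile_improves:
  assumes N: "odd N" "e < N" and qr: "1/2 < q" "q < r" "r < 1"
  shows "\<exists>\<sigma>\<in>expert_profiles N e. P_correct N q r e \<tau> \<le> P_correct N q r e \<sigma>"
proof -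
  define S where "S = {i. i < N \<and> i \<noteq> e \<and> \<tau> i = Sincere}"
  define m where "m = card S"
  have S_sub: "S \<subseteq> {..<N} - {e}"
    by (auto simp: S_def)
  have "m \<le> card ({..<N} - {e})"
    unfolding m_def using S_sub by (intro card_mono) auto
  then have m: "m < N" using N by simp
  define \<rho> where "\<rho> = log_odds r / log_odds q"
  have M: "0 < log_odds q" using qr by (intro log_odds_pos) auto
  then have \<rho>: "log_odds r = \<rho> * log_odds q" by (simp add: \<rho>_def)
  have "1 \<le> \<rho>"
    using M log_odds_less[of q r] qr by (simp add: \<rho>_def)
  moreover have "1 \<le> N - m" "odd (N - m + m)" using m N by simp_all
  ultimately obtain k where k: "1 \<le> k" "k \<le> N - m" "odd (k + m)" "real k \<le> \<rho> + 1"
      "\<rho> \<le> real k + 1 \<or> k = N - m"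
    by (rule exists_odd_threshold)
  have "card ({..<N} - insert e S) = N - 1 - m"
    using S_sub N by (subst card_Diff_subset) (auto simp: m_def S_def)
  then have "k - 1 \<le> card ({..<N} - insert e S)"
    using k(2) by simp
  then obtain D where D_sub: "D \<subseteq> {..<N} - insert e S" and D_card: "card D = k - 1"
    by (meson obtain_subset_with_card_n)
  interpret expert_delegation N e S D
    using N S_sub D_sub by unfold_locales auto
  have "P_correct N q r e \<tau> \<le> P_correct N q r e \<sigma>"
    using qr \<rho> S_def D_card k m by (intro P_correct_le_expert_profile) (auto simp: m_def)
  moreover have "\<sigma> \<in> expert_profiles N e"
    using S_sub D_sub by (auto simp: expert_profiles_def)
  ultimately show ?thesis by blast
qed

theorem lemma7:
  fixes N e :: nat and q r :: real
  assumes "odd N" and "e < N" and "1/2 < q" and "q < r" and "r < 1"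
  shows "\<exists>\<sigma>. neutral_profile N \<sigma>
           \<and> (\<forall>\<tau>. neutral_profile N \<tau> \<longrightarrow> P_correct N q r e \<tau> \<le> P_correct N q r e \<sigma>)
           \<and> (\<forall>i<N. i \<noteq> e \<and> \<sigma> i \<noteq> Abstain \<longrightarrow> held N \<sigma> i \<le> 1)"
proof -
  let ?P = "P_correct N q r e"
  have "expert_profile e {} {} \<in> expert_profiles N e"
    by (auto simp: expert_profiles_def)
  then have "Max (?P ` expert_profiles N e) \<in> ?P ` expert_profiles N e"
    using finite_expert_profiles by (intro Max_in) auto
  then obtain \<sigma> where "\<sigma> \<in> expert_profiles N e" and \<sigma>_max: "?P \<sigma> = Max (?P ` expert_profiles N e)"
    by auto
  then obtain S D where \<sigma>: "\<sigma> = expert_profile e S D" and deleg: "expert_delegation N e S D"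
    using assms(2) by (auto simp: expert_profiles_def expert_delegation_def)
  interpret expert_delegation N e S D by (fact deleg)
  have "?P \<tau> \<le> ?P \<sigma>" for \<tau>
  proof -
    obtain \<sigma>' where "\<sigma>' \<in> expert_profiles N e" "?P \<tau> \<le> ?P \<sigma>'"
      using expert_profile_improves[OF assms] by blast
    then show ?thesis
      using \<sigma>_max finite_expert_profiles by (auto intro: order_trans Max_ge)
  qed
  then show ?thesis
    using neutral_expert_profile held_expert_profile_le_one \<sigma> by blast
qed

end
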